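(* There exist an argumentation semantics $\sigma$ whose extensions are maximal conflict-free sets (w.r.t. set inclusion) and argumentation frameworks $AF=(AR,Attacks)$, $AF'=(AR',Attacks')$ with $AF\preceq_N AF'$ such that the following statement does NOT hold: if for all $E\in\sigma(AF)$ and all $E'\in\sigma(AF')$ we have $E'\not\subseteq AR$ or $E'=E$, then for every $E\in\sigma(AF)$, $$\{(a,b)\in Attacks': a\in AR'\setminus AR,\ b\in E\}=\emptyset\ \Longrightarrow\ \forall E'\in\sigma(AF'),\ E\subseteq E'.$$
   Context: An argumentation framework is a pair $(AR,Attacks)$ with $AR$ a finite set and $Attacks\subseteq AR\times AR$; $a$ attacks $b$ iff $(a,b)\in Attacks$. A set $S$ is conflict-free iff no element of $S$ attacks an element of $S$. An argumentation semantics $\sigma$ assigns to each argumentation framework a set $\sigma(AF)$ of subsets of $AR$; "$\sigma$'s extensions are maximal conflict-free sets" means that for every $AF$, every $E\in\sigma(AF)$ is a $\subseteq$-maximal conflict-free subset of the argument set of $AF$. $AF\preceq_N AF'$ (normal expansion) iff $AR\subseteq AR'$, $Attacks\subseteq Attacks'$ and no $(a,b)\in Attacks'\setminus Attacks$ has both $a,b\in AR$. *)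

theory Defs
  imports Main
begin

type_synonym 'a AF = "'a set \<times> ('a \<times> 'a) set"

definition is_AF :: "'a AF \<Rightarrow> bool" where
  "is_AF AF \<longleftrightarrow> finite (fst AF) \<and> snd AF \<subseteq> fst AF \<times> fst AF"

definition conflict_free :: "'a AF \<Rightarrow> 'a set \<Rightarrow> bool" where
  "conflict_free AF S \<longleftrightarrow> S \<subseteq> fst AF \<and> (\<forall>a\<in>S. \<forall>b\<in>S. (a, b) \<notin> snd AF)"

definition maximal_conflict_free :: "'a AF \<Rightarrow> 'a set \<Rightarrow> bool" where
  "maximal_conflict_free AF S \<longleftrightarrow>
     conflict_free AF S \<and> (\<forall>T. conflict_free AF T \<and> S \<subseteq> T \<longrightarrow> T = S)"

definition normal_expansion :: "'a AF \<Rightarrow> 'a AF \<Rightarrow> bool" where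
  "normal_expansion AF AF' \<longleftrightarrow>
     fst AF \<subseteq> fst AF' \<and> snd AF \<subseteq> snd AF' \<and>
     (\<forall>(a, b) \<in> snd AF' - snd AF. \<not> (a \<in> fst AF \<and> b \<in> fst AF))"

definition extensions_maximal_cf :: "('a AF \<Rightarrow> 'a set set) \<Rightarrow> bool" where
  "extensions_maximal_cf \<sigma> \<longleftrightarrow>
     (\<forall>AF. is_AF AF \<longrightarrow> (\<forall>E\<in>\<sigma> AF. maximal_conflict_free AF E))"

end

theory Submission
  imports Defs
begin

text \<open>Extend the single argument 0 by a new argument 1 that 0 attacks. Both \<open>{0}\<close> and \<open>{1}\<close>
  are maximal conflict-free in the expansion, and a semantics may choose \<open>{1}\<close> there. Then no
  extension of the expansion lies inside the old arguments, so the premise holds vacuously, and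
  no new argument attacks \<open>{0}\<close>; yet \<open>{0}\<close> is not contained in \<open>{1}\<close>.\<close>

lemma maximal_conflict_free_singleton: "maximal_conflict_free ({a}, {}) {a}"
  unfolding maximal_conflict_free_def conflict_free_def by auto

lemma maximal_conflict_free_attacked:
  assumes "a \<noteq> b"
  shows "maximal_conflict_free ({a, b}, {(a, b)}) {b}"
  unfolding maximal_conflict_free_def conflict_free_def
proof (intro conjI allI impI)
  fix T
  assume "(T \<subseteq> fst ({a, b}, {(a, b)}) \<and> (\<forall>x\<in>T. \<forall>y\<in>T. (x, y) \<notin> snd ({a, b}, {(a, b)})))
    \<and> {b} \<subseteq> T"
  then have "T \<subseteq> {a, b}" "b \<in> T" "a \<notin> T" by auto
  then show "T = {b}" by auto
qed (use assms in auto)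

theorem proposition54:
  shows "\<exists>\<sigma> :: nat AF \<Rightarrow> nat set set. extensions_maximal_cf \<sigma> \<and>
    (\<exists>AF AF'. is_AF AF \<and> is_AF AF' \<and> normal_expansion AF AF' \<and>
       \<not> ((\<forall>E\<in>\<sigma> AF. \<forall>E'\<in>\<sigma> AF'. \<not> E' \<subseteq> fst AF \<or> E' = E) \<longrightarrow>
            (\<forall>E\<in>\<sigma> AF. {(a, b) \<in> snd AF'. a \<in> fst AF' - fst AF \<and> b \<in> E} = {} \<longrightarrow>
               (\<forall>E'\<in>\<sigma> AF'. E \<subseteq> E'))))"
proof (intro exI conjI)
  let ?AF = "({0}, {}) :: nat AF"
  let ?AF' = "({0, 1}, {(0, 1)}) :: nat AF"
  let ?\<sigma> = "\<lambda>X. if X = ?AF then {{0}} else if X = ?AF' then {{1}} else {}"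
  show "extensions_maximal_cf ?\<sigma>"
    unfolding extensions_maximal_cf_def
    using maximal_conflict_free_singleton maximal_conflict_free_attacked[of "0::nat" 1] by auto
  show "is_AF ?AF" "is_AF ?AF'"
    unfolding is_AF_def by auto
  show "normal_expansion ?AF ?AF'"
    unfolding normal_expansion_def by auto
  show "\<not> ((\<forall>E\<in>?\<sigma> ?AF. \<forall>E'\<in>?\<sigma> ?AF'. \<not> E' \<subseteq> fst ?AF \<or> E' = E) \<longrightarrow>
            (\<forall>E\<in>?\<sigma> ?AF. {(a, b) \<in> snd ?AF'. a \<in> fst ?AF' - fst ?AF \<and> b \<in> E} = {} \<longrightarrow>
               (\<forall>E'\<in>?\<sigma> ?AF'. E \<subseteq> E')))"
    by auto
qed

end
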